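(* The only LW-surfaces of Riemann-type are: (1) the surfaces of revolution; (2) the classical Riemann examples of minimal surfaces.
   Context: A surface $S$ in Euclidean space $\mathbb{R}^3$ with principal curvatures $\kappa_1,\kappa_2$ is called a linear Weingarten surface (LW-surface) if $\kappa_1=m\,\kappa_2+n$ for real constants $m,n$, where $m\neq 0$ is assumed (so that no principal curvature vanishes identically) and the umbilical case ($\kappa_1=\kappa_2$) is excluded. A cyclic surface is a surface determined by a smooth uniparametric family of pieces of circles; it is of Riemann-type if the planes containing the circles of the foliation are parallel. Locally such a surface can be written as $X(u,v)=(a(u),b(u),u)+r(u)(\cos v,\sin v,0)$ with smooth $a,b$ and radius $r>0$; it is a surface of revolution iff $a,b$ are constant. The classical Riemann examples are the minimal surfaces ($(m,n)=(-1,0)$) of this form with $a'=\lambda r^2$, $b'=\mu r^2$ for constants $\lambda,\mu$ with $\lambda^2+\mu^2\neq 0$, and $1+(\lambda^2+\mu^2)r^4+r'^2-r r''=0$ (the case $\lambda^2+\mu^2=0$ giving the catenoid). *)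

theory Defs
  imports "HOL-Analysis.Analysis"
begin

definition smooth_on :: "real set \<Rightarrow> (real \<Rightarrow> real) \<Rightarrow> bool" where
  "smooth_on S f \<longleftrightarrow> (\<forall>k. \<forall>u\<in>S. ((deriv ^^ k) f) differentiable (at u))"

definition Xu :: "(real \<Rightarrow> real \<Rightarrow> real^3) \<Rightarrow> real \<Rightarrow> real \<Rightarrow> real^3" where
  "Xu X u v = vector_derivative (\<lambda>t. X t v) (at u)"
definition Xv :: "(real \<Rightarrow> real \<Rightarrow> real^3) \<Rightarrow> real \<Rightarrow> real \<Rightarrow> real^3" where
  "Xv X u v = vector_derivative (\<lambda>s. X u s) (at v)"
definition Xuu :: "(real \<Rightarrow> real \<Rightarrow> real^3) \<Rightarrow> real \<Rightarrow> real \<Rightarrow> real^3" where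
  "Xuu X u v = vector_derivative (\<lambda>t. Xu X t v) (at u)"
definition Xuv :: "(real \<Rightarrow> real \<Rightarrow> real^3) \<Rightarrow> real \<Rightarrow> real \<Rightarrow> real^3" where
  "Xuv X u v = vector_derivative (\<lambda>s. Xu X u s) (at v)"
definition Xvv :: "(real \<Rightarrow> real \<Rightarrow> real^3) \<Rightarrow> real \<Rightarrow> real \<Rightarrow> real^3" where
  "Xvv X u v = vector_derivative (\<lambda>s. Xv X u s) (at v)"

definition unit_normal :: "(real \<Rightarrow> real \<Rightarrow> real^3) \<Rightarrow> real \<Rightarrow> real \<Rightarrow> real^3" where
  "unit_normal X u v = (1 / norm (cross3 (Xu X u v) (Xv X u v))) *\<^sub>R cross3 (Xu X u v) (Xv X u v)"

definition fE where "fE X u v = Xu X u v \<bullet> Xu X u v"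
definition fF where "fF X u v = Xu X u v \<bullet> Xv X u v"
definition fG where "fG X u v = Xv X u v \<bullet> Xv X u v"
definition sL where "sL X u v = Xuu X u v \<bullet> unit_normal X u v"
definition sM where "sM X u v = Xuv X u v \<bullet> unit_normal X u v"
definition sN where "sN X u v = Xvv X u v \<bullet> unit_normal X u v"

definition mean_curv :: "(real \<Rightarrow> real \<Rightarrow> real^3) \<Rightarrow> real \<Rightarrow> real \<Rightarrow> real" where
  "mean_curv X u v = (fE X u v * sN X u v - 2 * fF X u v * sM X u v + fG X u v * sL X u v)
      / (2 * (fE X u v * fG X u v - (fF X u v)^2))"
definition gauss_curv :: "(real \<Rightarrow> real \<Rightarrow> real^3) \<Rightarrow> real \<Rightarrow> real \<Rightarrow> real" where
  "gauss_curv X u v = (sL X u v * sN X u v - (sM X u v)^2) / (fE X u v * fG X u v - (fF X u v)^2)"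

definition kappa1 where
  "kappa1 X u v = mean_curv X u v + sqrt ((mean_curv X u v)^2 - gauss_curv X u v)"
definition kappa2 where
  "kappa2 X u v = mean_curv X u v - sqrt ((mean_curv X u v)^2 - gauss_curv X u v)"

text \<open>Linear Weingarten surface on domain D: non-umbilic at every point, and the principal
  curvatures (labelled consistently on D) satisfy kappa_1 = m kappa_2 + n, m nonzero.\<close>
definition LW_surface :: "(real \<Rightarrow> real \<Rightarrow> real^3) \<Rightarrow> (real \<times> real) set \<Rightarrow> real \<Rightarrow> real \<Rightarrow> bool" where
  "LW_surface X D m n \<longleftrightarrow> m \<noteq> 0 \<and>
     (\<forall>(u,v)\<in>D. kappa1 X u v \<noteq> kappa2 X u v) \<and>
     ((\<forall>(u,v)\<in>D. kappa1 X u v = m * kappa2 X u v + n) \<or>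
      (\<forall>(u,v)\<in>D. kappa2 X u v = m * kappa1 X u v + n))"

definition riemann_type_surf :: "(real \<Rightarrow> real) \<Rightarrow> (real \<Rightarrow> real) \<Rightarrow> (real \<Rightarrow> real) \<Rightarrow> real \<Rightarrow> real \<Rightarrow> real^3" where
  "riemann_type_surf a b r u v = vector [a u + r u * cos v, b u + r u * sin v, u]"

end

theory Submission
  imports Defs "HOL-Complex_Analysis.Conformal_Mappings"
begin

text \<open>
  Along a circle \<open>u = const\<close> the curvatures of \<open>X\<close> are rational in \<open>cos v\<close> and \<open>sin v\<close>:
  with \<open>w = r' + a' cos v + b' sin v\<close> and \<open>W = sqrt (1 + w\<^sup>2)\<close> one has
  \<open>2 r W\<^sup>3 H = S\<close> and \<open>r W\<^sup>4 K = - A\<close> for trigonometric polynomials \<open>S\<close>, \<open>A\<close> of degree one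
  in \<open>v\<close>. Multiplied by \<open>r\<^sup>2 W\<^sup>6\<close>, the relation between the principal curvatures becomes
  \<open>m S\<^sup>2 + (1 - m) n r S W\<^sup>3 - n\<^sup>2 r\<^sup>2 W\<^sup>6 + (1 + m)\<^sup>2 r A W\<^sup>2 = 0\<close> on an interval of \<open>v\<close>; after
  squaring out \<open>W\<close> it is an identity between entire functions, so it holds for all complex \<open>v\<close>.
  If \<open>(a', b') \<noteq> 0\<close> at some \<open>u\<close>, then \<open>1 + w\<^sup>2\<close> has complex zeros, and evaluating there forces
  first \<open>S = 0\<close> and then, unless \<open>m = -1\<close>, also \<open>A = 0\<close>, which is impossible because the constant
  terms of \<open>S\<close> and \<open>A\<close> cannot vanish together. So \<open>m = -1\<close>, \<open>n = 0\<close>, the surface is minimal,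
  \<open>S\<close> vanishes identically, and its coefficients are the equations \<open>r a'' = 2 r' a'\<close>,
  \<open>r b'' = 2 r' b'\<close>, \<open>r r'' = 1 + a'\<^sup>2 + b'\<^sup>2 + r'\<^sup>2\<close>; the first two integrate to
  \<open>a' = \<lambda> r\<^sup>2\<close>, \<open>b' = \<mu> r\<^sup>2\<close>. Otherwise \<open>a\<close> and \<open>b\<close> are constant: a surface of revolution.
\<close>

section \<open>Trigonometric polynomials of degree one\<close>

definition trig_poly :: "real \<Rightarrow> real \<Rightarrow> real \<Rightarrow> 'a \<Rightarrow> 'a::{real_normed_field,banach}" where
  "trig_poly c0 c1 c2 z = of_real c0 + of_real c1 * cos z + of_real c2 * sin z"

lemma trig_poly_real: "trig_poly c0 c1 c2 x = c0 + c1 * cos x + c2 * sin (x::real)"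
  by (simp add: trig_poly_def)

lemma of_real_trig_poly: "of_real (trig_poly c0 c1 c2 x) = trig_poly c0 c1 c2 (of_real x)"
  by (simp add: trig_poly_def cos_of_real sin_of_real)

lemma holomorphic_on_trig_poly [holomorphic_intros]:
  "f holomorphic_on S \<Longrightarrow> (\<lambda>z. trig_poly c0 c1 c2 (f z)) holomorphic_on S"
  unfolding trig_poly_def by (intro holomorphic_intros)

lemma holomorphic_eq_0_on_real_interval:
  fixes f :: "complex \<Rightarrow> complex"
  assumes "f holomorphic_on UNIV" and "v0 < v1"
    and "\<And>v. v \<in> {v0<..<v1} \<Longrightarrow> f (of_real v) = 0"
  shows "f z = 0"
proof (rule analytic_continuation[OF assms(1) open_UNIV connected_UNIV subset_UNIV UNIV_I])
  show "(of_real v0 :: complex) islimpt of_real ` {v0<..<v1}"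
    by (rule islimpt_isCont_image[OF islimpt_greaterThanLessThan1[OF assms(2)]])
      (auto intro: continuous_intros simp: eventually_at_filter)
qed (use assms(3) in auto)

lemma trig_poly_eq_0_on_interval:
  assumes "v0 < v1" and "\<And>v. v \<in> {v0<..<v1} \<Longrightarrow> trig_poly c0 c1 c2 v = (0::real)"
  shows "c0 = 0 \<and> c1 = 0 \<and> c2 = 0"
proof -
  have "trig_poly c0 c1 c2 z = (0::complex)" for z
    by (rule holomorphic_eq_0_on_real_interval[OF _ assms(1)])
      (auto intro: holomorphic_intros simp: of_real_trig_poly[symmetric] assms(2))
  from this[of 0] this[of pi] this[of "pi / 2"] show ?thesis
    by (simp add: trig_poly_def)
qed

lemma quadratic_common_roots_proportional:
  fixes a2 a1 a0 b2 b1 b0 :: complex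
  assumes a2: "a2 \<noteq> 0" and disc: "a1\<^sup>2 - 4 * a2 * a0 \<noteq> 0"
    and roots: "\<And>\<xi>. a2 * \<xi>\<^sup>2 + a1 * \<xi> + a0 = 0 \<Longrightarrow> b2 * \<xi>\<^sup>2 + b1 * \<xi> + b0 = 0"
  shows "\<exists>k. b2 = k * a2 \<and> b1 = k * a1 \<and> b0 = k * a0"
proof -
  define d where "d = csqrt (a1\<^sup>2 - 4 * a2 * a0)"
  have d2: "d\<^sup>2 = a1\<^sup>2 - 4 * a2 * a0" and "d \<noteq> 0"
    using disc unfolding d_def by auto
  define x1 x2 where "x1 = (d - a1) / (2 * a2)" and "x2 = (- d - a1) / (2 * a2)"
  have "a2 * ((e - a1) / (2 * a2))\<^sup>2 + a1 * ((e - a1) / (2 * a2)) + a0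
      = (e\<^sup>2 - (a1\<^sup>2 - 4 * a2 * a0)) / (4 * a2)" for e
    using a2 by (simp add: field_simps power2_eq_square)
  then have x12: "a2 * x1\<^sup>2 + a1 * x1 + a0 = 0" "a2 * x2\<^sup>2 + a1 * x2 + a0 = 0"
    unfolding x1_def x2_def using d2 by auto
  have "x1 \<noteq> x2"
    using a2 \<open>d \<noteq> 0\<close> unfolding x1_def x2_def by (simp add: field_simps)
  define k where "k = b2 / a2"
  \<comment> \<open>\<open>b - k a\<close> is a polynomial of degree at most one with the two roots \<open>x1 \<noteq> x2\<close>\<close>
  have lin: "(b1 - k * a1) * x + (b0 - k * a0) = 0" if "a2 * x\<^sup>2 + a1 * x + a0 = 0" for x
  proof -
    have "(b1 - k * a1) * x + (b0 - k * a0) = (b2 * x\<^sup>2 + b1 * x + b0) - k * (a2 * x\<^sup>2 + a1 * x + a0)"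
      using a2 unfolding k_def by (simp add: field_simps)
    then show ?thesis
      using roots that by simp
  qed
  have "(b1 - k * a1) * (x1 - x2) = ((b1 - k * a1) * x1 + (b0 - k * a0)) - ((b1 - k * a1) * x2 + (b0 - k * a0))"
    by (simp add: algebra_simps)
  then have "(b1 - k * a1) * (x1 - x2) = 0"
    using lin[OF x12(1)] lin[OF x12(2)] by simp
  then have "b1 = k * a1"
    using \<open>x1 \<noteq> x2\<close> by simp
  moreover have "b0 = k * a0"
    using lin[OF x12(1)] \<open>b1 = k * a1\<close> by simp
  moreover have "b2 = k * a2"
    using a2 unfolding k_def by simp
  ultimately show ?thesis
    by blast
qed

lemma trig_poly_exp_substitution:
  fixes \<xi> \<kappa> :: complex
  assumes "\<xi> \<noteq> 0"
  shows "\<xi> * (trig_poly c0 c1 c2 (- \<i> * Ln \<xi>) - \<kappa>) =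
    (c1 - \<i> * c2) / 2 * \<xi>\<^sup>2 + (c0 - \<kappa>) * \<xi> + (c1 + \<i> * c2) / 2"
proof -
  have "exp (\<i> * (- \<i> * Ln \<xi>)) = \<xi>" "exp (- (\<i> * (- \<i> * Ln \<xi>))) = 1 / \<xi>"
    using assms by (simp_all add: exp_minus inverse_eq_divide)
  then have cos: "cos (- \<i> * Ln \<xi>) = (\<xi> + 1 / \<xi>) / 2"
    and sin: "sin (- \<i> * Ln \<xi>) = (\<xi> - 1 / \<xi>) / (2 * \<i>)"
    unfolding cos_exp_eq sin_exp_eq by simp_all
  show ?thesis
    unfolding trig_poly_def cos sin using assms by (simp add: field_simps power2_eq_square)
qed

lemma trig_poly_eq_0_if_vanishes_where_square_eq_minus_1:
  fixes c0 c1 c2 d0 d1 d2 :: real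
  assumes c12: "c1 \<noteq> 0 \<or> c2 \<noteq> 0"
    and vanish: "\<And>z::complex. 1 + (trig_poly c0 c1 c2 z)\<^sup>2 = 0 \<Longrightarrow> trig_poly d0 d1 d2 z = 0"
  shows "d0 = 0 \<and> d1 = 0 \<and> d2 = 0"
proof -
  define \<alpha> \<beta> :: complex where "\<alpha> = (c1 - \<i> * c2) / 2" and "\<beta> = (c1 + \<i> * c2) / 2"
  define \<delta> \<epsilon> :: complex where "\<delta> = (d1 - \<i> * d2) / 2" and "\<epsilon> = (d1 + \<i> * d2) / 2"
  have "\<alpha> \<noteq> 0" "\<beta> \<noteq> 0"
    using c12 unfolding \<alpha>_def \<beta>_def by (auto simp: complex_eq_iff)
  \<comment> \<open>under \<open>\<xi> = exp (\<i> z)\<close> the points with \<open>trig_poly c0 c1 c2 z = \<kappa>\<close> become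
    the roots of \<open>\<alpha> \<xi>\<^sup>2 + (c0 - \<kappa>) \<xi> + \<beta>\<close>; for \<open>\<kappa> = \<plusminus>\<i>\<close> the quadratic
    \<open>\<delta> \<xi>\<^sup>2 + d0 \<xi> + \<epsilon>\<close> must be a multiple of both\<close>
  have proportional: "\<exists>k. \<delta> = k * \<alpha> \<and> complex_of_real d0 = k * (c0 - \<kappa>) \<and> \<epsilon> = k * \<beta>"
    if \<kappa>: "\<kappa> = \<i> \<or> \<kappa> = - \<i>" for \<kappa> :: complex
  proof (rule quadratic_common_roots_proportional[OF \<open>\<alpha> \<noteq> 0\<close>])
    have "4 * \<alpha> * \<beta> = c1\<^sup>2 + c2\<^sup>2"
      unfolding \<alpha>_def \<beta>_def by (simp add: field_simps power2_eq_square)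
    moreover have "(c0 - \<kappa>)\<^sup>2 \<noteq> of_real (c1\<^sup>2 + c2\<^sup>2)"
    proof
      assume eq: "(c0 - \<kappa>)\<^sup>2 = of_real (c1\<^sup>2 + c2\<^sup>2)"
      have "c0 = 0"
        using arg_cong[OF eq, of Im] \<kappa> by (auto simp: power2_eq_square)
      then have "c1\<^sup>2 + c2\<^sup>2 = -1"
        using arg_cong[OF eq, of Re] \<kappa> by (auto simp: power2_eq_square)
      then show False
        using sum_power2_ge_zero[of c1 c2] by linarith
    qed
    ultimately show "(c0 - \<kappa>)\<^sup>2 - 4 * \<alpha> * \<beta> \<noteq> 0"
      by simp
  next
    fix \<xi> assume root: "\<alpha> * \<xi>\<^sup>2 + (c0 - \<kappa>) * \<xi> + \<beta> = 0"
    then have "\<xi> \<noteq> 0"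
      using \<open>\<beta> \<noteq> 0\<close> by auto
    define z where "z = - \<i> * Ln \<xi>"
    have "\<xi> * (trig_poly c0 c1 c2 z - \<kappa>) = 0"
      using trig_poly_exp_substitution[OF \<open>\<xi> \<noteq> 0\<close>] root unfolding z_def \<alpha>_def \<beta>_def by simp
    then have "1 + (trig_poly c0 c1 c2 z)\<^sup>2 = 0"
      using \<open>\<xi> \<noteq> 0\<close> \<kappa> by auto
    have "\<delta> * \<xi>\<^sup>2 + (complex_of_real d0 - 0) * \<xi> + \<epsilon> = \<xi> * (trig_poly d0 d1 d2 z - 0)"
      unfolding z_def \<delta>_def \<epsilon>_def by (rule trig_poly_exp_substitution[OF \<open>\<xi> \<noteq> 0\<close>, symmetric])
    also have "\<dots> = 0"
      using vanish \<open>1 + (trig_poly c0 c1 c2 z)\<^sup>2 = 0\<close> by simp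
    finally show "\<delta> * \<xi>\<^sup>2 + complex_of_real d0 * \<xi> + \<epsilon> = 0"
      by simp
  qed
  obtain k where k: "\<delta> = k * \<alpha>" "complex_of_real d0 = k * (c0 - \<i>)" "\<epsilon> = k * \<beta>"
    using proportional[of \<i>] by blast
  obtain k' where k': "\<delta> = k' * \<alpha>" "complex_of_real d0 = k' * (c0 + \<i>)"
    using proportional[of "- \<i>"] by auto
  have "k = k'"
    using k(1) k'(1) \<open>\<alpha> \<noteq> 0\<close> by simp
  then have "k = 0"
    using k(2) k'(2) by (simp add: algebra_simps)
  then have "\<delta> = 0" "\<epsilon> = 0" "d0 = 0"
    using k by simp_all
  moreover have "of_real d1 = \<delta> + \<epsilon>" "\<i> * of_real d2 = \<epsilon> - \<delta>"
    unfolding \<delta>_def \<epsilon>_def by (simp_all add: field_simps)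
  ultimately show ?thesis
    by simp
qed

section \<open>Curvatures of Riemann-type surfaces\<close>

lemma has_vector_derivative_vector_3:
  assumes "(f1 has_real_derivative d1) (at x within S)" "(f2 has_real_derivative d2) (at x within S)"
    and "(f3 has_real_derivative d3) (at x within S)"
  shows "((\<lambda>t. vector [f1 t, f2 t, f3 t] :: real^3) has_vector_derivative vector [d1, d2, d3]) (at x within S)"
proof -
  have axis_sum: "vector [x1, x2, x3] = x1 *\<^sub>R axis 1 1 + x2 *\<^sub>R axis 2 1 + x3 *\<^sub>R (axis 3 1 :: real^3)"
    for x1 x2 x3 :: real
    by (simp add: vec_eq_iff forall_3 axis_def)
  show ?thesis
    unfolding axis_sum using assms by (auto intro!: derivative_eq_intros)
qed

lemma inner_vector_3: "(vector [x1, x2, x3] :: real^3) \<bullet> vector [y1, y2, y3] = x1*y1 + x2*y2 + x3*y3"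
  by (simp add: inner_vec_def sum_3)

lemma cross3_vector_3:
  "cross3 (vector [x1, x2, x3]) (vector [y1, y2, y3]) =
     (vector [x2*y3 - x3*y2, x3*y1 - x1*y3, x1*y2 - x2*y1] :: real^3)"
  by (simp add: cross3_def)

lemma scaleR_vector_3: "c *\<^sub>R (vector [x1, x2, x3] :: real^3) = vector [c*x1, c*x2, c*x3]"
  by (simp add: vec_eq_iff forall_3)

lemma norm_vector_3: "norm (vector [x1, x2, x3] :: real^3) = sqrt (x1\<^sup>2 + x2\<^sup>2 + x3\<^sup>2)"
  by (simp add: norm_eq_sqrt_inner inner_vector_3 power2_eq_square)

lemma Xv_riemann_type_surf:
  "Xv (riemann_type_surf a b r) u v = vector [- r u * sin v, r u * cos v, 0]"
  unfolding Xv_def riemann_type_surf_def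
  by (rule vector_derivative_at, rule has_vector_derivative_vector_3) (auto intro!: derivative_eq_intros)

lemma Xvv_riemann_type_surf:
  "Xvv (riemann_type_surf a b r) u v = vector [- r u * cos v, - r u * sin v, 0]"
  unfolding Xvv_def Xv_riemann_type_surf
  by (rule vector_derivative_at, rule has_vector_derivative_vector_3) (auto intro!: derivative_eq_intros)

locale C2_riemann_type =
  fixes a b r :: "real \<Rightarrow> real" and I :: "real set"
  assumes open_I: "open I"
    and da: "\<And>t. t \<in> I \<Longrightarrow> (a has_real_derivative deriv a t) (at t)"
    and db: "\<And>t. t \<in> I \<Longrightarrow> (b has_real_derivative deriv b t) (at t)"
    and dr: "\<And>t. t \<in> I \<Longrightarrow> (r has_real_derivative deriv r t) (at t)"
    and dda: "\<And>t. t \<in> I \<Longrightarrow> (deriv a has_real_derivative deriv (deriv a) t) (at t)"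
    and ddb: "\<And>t. t \<in> I \<Longrightarrow> (deriv b has_real_derivative deriv (deriv b) t) (at t)"
    and ddr: "\<And>t. t \<in> I \<Longrightarrow> (deriv r has_real_derivative deriv (deriv r) t) (at t)"
begin

lemma Xu_riemann_type_surf:
  assumes "u \<in> I"
  shows "Xu (riemann_type_surf a b r) u v =
    vector [deriv a u + deriv r u * cos v, deriv b u + deriv r u * sin v, 1]"
  unfolding Xu_def riemann_type_surf_def
  by (rule vector_derivative_at, rule has_vector_derivative_vector_3)
    (auto intro!: derivative_eq_intros da db dr assms)

lemma Xuv_riemann_type_surf:
  assumes "u \<in> I"
  shows "Xuv (riemann_type_surf a b r) u v = vector [- deriv r u * sin v, deriv r u * cos v, 0]"
  unfolding Xuv_def Xu_riemann_type_surf[OF assms]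
  by (rule vector_derivative_at, rule has_vector_derivative_vector_3) (auto intro!: derivative_eq_intros)

lemma Xuu_riemann_type_surf:
  assumes u: "u \<in> I"
  shows "Xuu (riemann_type_surf a b r) u v = vector [deriv (deriv a) u + deriv (deriv r) u * cos v,
    deriv (deriv b) u + deriv (deriv r) u * sin v, 0]"
  unfolding Xuu_def
proof (rule vector_derivative_at, rule has_vector_derivative_transform_within_open[OF _ open_I u])
  show "((\<lambda>t. vector [deriv a t + deriv r t * cos v, deriv b t + deriv r t * sin v, 1] :: real^3)
      has_vector_derivative vector [deriv (deriv a) u + deriv (deriv r) u * cos v,
        deriv (deriv b) u + deriv (deriv r) u * sin v, 0]) (at u)"
    by (rule has_vector_derivative_vector_3) (auto intro!: derivative_eq_intros dda ddb ddr u)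
qed (simp add: Xu_riemann_type_surf)

end

lemma curvatures_of_riemann_type_frame:
  fixes X :: "real \<Rightarrow> real \<Rightarrow> real^3" and p q \<rho> p1 q1 r2 R c s :: real
  assumes Xu: "Xu X u v = vector [p + \<rho> * c, q + \<rho> * s, 1]"
    and Xv: "Xv X u v = vector [- R * s, R * c, 0]"
    and Xuu: "Xuu X u v = vector [p1 + r2 * c, q1 + r2 * s, 0]"
    and Xuv: "Xuv X u v = vector [- \<rho> * s, \<rho> * c, 0]"
    and Xvv: "Xvv X u v = vector [- R * c, - R * s, 0]"
    and cs: "c\<^sup>2 + s\<^sup>2 = 1" and R: "R > 0"
  defines "W \<equiv> sqrt (1 + (\<rho> + p * c + q * s)\<^sup>2)"
    and "S \<equiv> (1 + p\<^sup>2 + q\<^sup>2 + \<rho>\<^sup>2 - R * r2) + (2 * \<rho> * p - R * p1) * c + (2 * \<rho> * q - R * q1) * s"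
    and "A \<equiv> r2 + p1 * c + q1 * s"
  shows "mean_curv X u v = S / (2 * R * W^3)" and "gauss_curv X u v = - A / (R * W^4)"
    and "gauss_curv X u v \<le> (mean_curv X u v)\<^sup>2"
proof -
  have mod_cs: "x = y" if "x - y = k * (c\<^sup>2 + s\<^sup>2 - 1)" for x y k :: real
    using that cs by simp
  define w t where "w = \<rho> + p * c + q * s" and "t = q * c - p * s"
  have W2: "W\<^sup>2 = 1 + w\<^sup>2" and W: "W > 0"
    unfolding W_def w_def by (simp_all add: add_pos_nonneg)
  have cross: "cross3 (Xu X u v) (Xv X u v) = vector [- R * c, - R * s, R * w]"
    unfolding Xu Xv cross3_vector_3 w_def
    by (simp add: vec_eq_iff forall_3, rule mod_cs[where k = "\<rho> * R"]) (simp add: algebra_simps power2_eq_square)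
  have "norm (cross3 (Xu X u v) (Xv X u v)) = R * W"
  proof -
    have "(- R * c)\<^sup>2 + (- R * s)\<^sup>2 + (R * w)\<^sup>2 = (R * W)\<^sup>2"
      by (rule mod_cs[where k = "R\<^sup>2"]) (simp add: power_mult_distrib W2 algebra_simps)
    then show ?thesis
      unfolding cross norm_vector_3 using R W by simp
  qed
  then have normal: "unit_normal X u v = vector [- c / W, - s / W, w / W]"
    unfolding unit_normal_def cross scaleR_vector_3 using R W by simp
  have E: "fE X u v = 1 + (p + \<rho> * c)\<^sup>2 + (q + \<rho> * s)\<^sup>2"
    unfolding fE_def Xu inner_vector_3 by (simp add: power2_eq_square)
  have F: "fF X u v = R * t"
    unfolding fF_def Xu Xv inner_vector_3 t_def by (simp add: algebra_simps)
  have G: "fG X u v = R\<^sup>2"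
    unfolding fG_def Xv inner_vector_3
    by (rule mod_cs[where k = "R\<^sup>2"]) (simp add: algebra_simps power2_eq_square)
  have L: "sL X u v = - A / W"
    unfolding sL_def Xuu normal inner_vector_3 A_def
    by (rule mod_cs[where k = "- r2 / W"]) (use W in \<open>simp add: field_simps power2_eq_square\<close>)
  have M: "sM X u v = 0"
    unfolding sM_def Xuv normal inner_vector_3 by (simp add: field_simps)
  have N: "sN X u v = R / W"
    unfolding sN_def Xvv normal inner_vector_3
    by (rule mod_cs[where k = "R / W"]) (use W in \<open>simp add: field_simps power2_eq_square\<close>)
  have E_eq: "fE X u v = W\<^sup>2 + t\<^sup>2"
    unfolding E W2 w_def t_def by (rule mod_cs[where k = "\<rho>\<^sup>2 - p\<^sup>2 - q\<^sup>2"]) (simp add: algebra_simps power2_eq_square)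
  have S_eq: "S = W\<^sup>2 + t\<^sup>2 - R * A"
    unfolding S_def A_def W2 w_def t_def
    by (rule mod_cs[where k = "- p\<^sup>2 - q\<^sup>2"]) (simp add: algebra_simps power2_eq_square)
  have EG_F2: "fE X u v * fG X u v - (fF X u v)\<^sup>2 = R\<^sup>2 * W\<^sup>2"
    unfolding E_eq F G by (simp add: algebra_simps power2_eq_square)
  show H: "mean_curv X u v = S / (2 * R * W^3)"
    unfolding mean_curv_def EG_F2 unfolding M L N G E_eq S_eq
    using R W by (simp add: field_simps power2_eq_square power3_eq_cube)
  show K: "gauss_curv X u v = - A / (R * W^4)"
    unfolding gauss_curv_def EG_F2 unfolding L M N
    using R W by (simp add: field_simps power2_eq_square eval_nat_numeral)
  have "(S / (2 * R * W^3))\<^sup>2 - (- A / (R * W^4)) = (S\<^sup>2 + 4 * R * A * W\<^sup>2) / (4 * R\<^sup>2 * W^6)"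
    using R W by (simp add: field_simps power2_eq_square eval_nat_numeral)
  also have "\<dots> = ((W\<^sup>2 + R * A - t\<^sup>2)\<^sup>2 + 4 * t\<^sup>2 * W\<^sup>2) / (4 * R\<^sup>2 * W^6)"
    unfolding S_eq by (simp add: algebra_simps power2_eq_square)
  also have "\<dots> \<ge> 0"
    by simp
  finally show "gauss_curv X u v \<le> (mean_curv X u v)\<^sup>2"
    unfolding H K by simp
qed

lemma linear_relation_of_principal_curvatures:
  fixes H K m n :: real
  assumes "K \<le> H\<^sup>2"
    and "H + sqrt (H\<^sup>2 - K) = m * (H - sqrt (H\<^sup>2 - K)) + n \<or>
      H - sqrt (H\<^sup>2 - K) = m * (H + sqrt (H\<^sup>2 - K)) + n"
  shows "m * (2 * H)\<^sup>2 + (1 - m) * (2 * H) * n - n\<^sup>2 - (1 + m)\<^sup>2 * K = 0"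
proof -
  define s where "s = sqrt (H\<^sup>2 - K)"
  have K: "K = H\<^sup>2 - s\<^sup>2"
    unfolding s_def using assms(1) by simp
  from assms(2) have "n = H + s - m * (H - s) \<or> n = H - s - m * (H + s)"
    unfolding s_def by auto
  then show ?thesis
    unfolding K by (elim disjE; hypsubst; simp add: algebra_simps power2_eq_square)
qed

context C2_riemann_type
begin

lemma riemann_type_surf_curvatures:
  fixes u v :: real
  assumes u: "u \<in> I" and r: "r u > 0"
  defines "W \<equiv> sqrt (1 + (trig_poly (deriv r u) (deriv a u) (deriv b u) v)\<^sup>2)"
    and "S \<equiv> trig_poly (1 + (deriv a u)\<^sup>2 + (deriv b u)\<^sup>2 + (deriv r u)\<^sup>2 - r u * deriv (deriv r) u)
      (2 * deriv r u * deriv a u - r u * deriv (deriv a) u) (2 * deriv r u * deriv b u - r u * deriv (deriv b) u) v"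
    and "A \<equiv> trig_poly (deriv (deriv r) u) (deriv (deriv a) u) (deriv (deriv b) u) v"
  shows "mean_curv (riemann_type_surf a b r) u v = S / (2 * r u * W^3)"
    and "gauss_curv (riemann_type_surf a b r) u v = - A / (r u * W^4)"
    and "gauss_curv (riemann_type_surf a b r) u v \<le> (mean_curv (riemann_type_surf a b r) u v)\<^sup>2"
  using curvatures_of_riemann_type_frame[OF Xu_riemann_type_surf[OF u] Xv_riemann_type_surf
      Xuu_riemann_type_surf[OF u] Xuv_riemann_type_surf[OF u] Xvv_riemann_type_surf sin_cos_squared_add2 r]
  unfolding S_def A_def W_def trig_poly_real by simp_all

lemma riemann_type_surf_LW_identity:
  assumes u: "u \<in> I" and r: "r u > 0"
    and relation: "kappa1 (riemann_type_surf a b r) u v = m * kappa2 (riemann_type_surf a b r) u v + n \<or>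
      kappa2 (riemann_type_surf a b r) u v = m * kappa1 (riemann_type_surf a b r) u v + n"
  defines "W \<equiv> sqrt (1 + (trig_poly (deriv r u) (deriv a u) (deriv b u) v)\<^sup>2)"
    and "S \<equiv> trig_poly (1 + (deriv a u)\<^sup>2 + (deriv b u)\<^sup>2 + (deriv r u)\<^sup>2 - r u * deriv (deriv r) u)
      (2 * deriv r u * deriv a u - r u * deriv (deriv a) u) (2 * deriv r u * deriv b u - r u * deriv (deriv b) u) v"
    and "A \<equiv> trig_poly (deriv (deriv r) u) (deriv (deriv a) u) (deriv (deriv b) u) v"
  shows "m * S\<^sup>2 + (1 - m) * n * r u * S * W^3 - n\<^sup>2 * (r u)\<^sup>2 * W^6 + (1 + m)\<^sup>2 * r u * A * W\<^sup>2 = 0"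
proof -
  let ?H = "mean_curv (riemann_type_surf a b r) u v" and ?K = "gauss_curv (riemann_type_surf a b r) u v"
  note curvatures = riemann_type_surf_curvatures[OF u r, of v, folded W_def S_def A_def]
  have W: "W > 0"
    unfolding W_def by (simp add: add_pos_nonneg)
  have "m * (2 * ?H)\<^sup>2 + (1 - m) * (2 * ?H) * n - n\<^sup>2 - (1 + m)\<^sup>2 * ?K = 0"
    using linear_relation_of_principal_curvatures[OF curvatures(3)] relation
    unfolding kappa1_def kappa2_def by simp
  moreover have "(r u)\<^sup>2 * W^6 * (m * (2 * ?H)\<^sup>2 + (1 - m) * (2 * ?H) * n - n\<^sup>2 - (1 + m)\<^sup>2 * ?K)
      = m * S\<^sup>2 + (1 - m) * n * r u * S * W^3 - n\<^sup>2 * (r u)\<^sup>2 * W^6 + (1 + m)\<^sup>2 * r u * A * W\<^sup>2"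
    unfolding curvatures(1,2) using r W by (simp add: field_simps power2_eq_square eval_nat_numeral)
  ultimately show ?thesis
    by simp
qed

end

section \<open>Linear Weingarten surfaces of Riemann type\<close>

lemma LW_trig_identity_S_eq_0:
  fixes \<omega>0 \<omega>1 \<omega>2 \<sigma>0 \<sigma>1 \<sigma>2 \<alpha>0 \<alpha>1 \<alpha>2 R m n v0 v1 :: real
  defines "W \<equiv> \<lambda>v. sqrt (1 + (trig_poly \<omega>0 \<omega>1 \<omega>2 v)\<^sup>2)"
  assumes m: "m \<noteq> 0" and v: "v0 < v1" and \<omega>: "\<omega>1 \<noteq> 0 \<or> \<omega>2 \<noteq> 0"
    and identity: "\<And>v. v \<in> {v0<..<v1} \<Longrightarrow>
      m * (trig_poly \<sigma>0 \<sigma>1 \<sigma>2 v)\<^sup>2 + (1 - m) * n * R * trig_poly \<sigma>0 \<sigma>1 \<sigma>2 v * W v ^ 3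
      - n\<^sup>2 * R\<^sup>2 * W v ^ 6 + (1 + m)\<^sup>2 * R * trig_poly \<alpha>0 \<alpha>1 \<alpha>2 v * (W v)\<^sup>2 = 0"
  shows "\<sigma>0 = 0 \<and> \<sigma>1 = 0 \<and> \<sigma>2 = 0"
proof -
  define S A D :: "complex \<Rightarrow> complex"
    where "S = trig_poly \<sigma>0 \<sigma>1 \<sigma>2" and "A = trig_poly \<alpha>0 \<alpha>1 \<alpha>2"
      and "D = (\<lambda>z. 1 + (trig_poly \<omega>0 \<omega>1 \<omega>2 z)\<^sup>2)"
  \<comment> \<open>squaring eliminates the square root \<open>W = sqrt D\<close>\<close>
  define F where "F = (\<lambda>z. (m * (S z)\<^sup>2 - n\<^sup>2 * R\<^sup>2 * (D z)^3 + (1 + m)\<^sup>2 * R * A z * D z)\<^sup>2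
    - ((1 - m) * n * R * S z)\<^sup>2 * (D z)^3)"
  have "F z = 0" for z
  proof (rule holomorphic_eq_0_on_real_interval[where f = F, OF _ v])
    show "F holomorphic_on UNIV"
      unfolding F_def S_def A_def D_def by (intro holomorphic_intros)
  next
    fix v assume "v \<in> {v0<..<v1}"
    define s a d where "s = trig_poly \<sigma>0 \<sigma>1 \<sigma>2 v" and "a = trig_poly \<alpha>0 \<alpha>1 \<alpha>2 v"
      and "d = 1 + (trig_poly \<omega>0 \<omega>1 \<omega>2 v)\<^sup>2"
    have W2: "(W v)\<^sup>2 = d"
      unfolding W_def d_def by simp
    have "m * s\<^sup>2 - n\<^sup>2 * R\<^sup>2 * d^3 + (1 + m)\<^sup>2 * R * a * d = - ((1 - m) * n * R * s) * W v ^ 3"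
      using identity[OF \<open>v \<in> {v0<..<v1}\<close>] unfolding s_def a_def W2[symmetric]
      by (simp add: algebra_simps flip: power_mult)
    then have "(m * s\<^sup>2 - n\<^sup>2 * R\<^sup>2 * d^3 + (1 + m)\<^sup>2 * R * a * d)\<^sup>2 = ((1 - m) * n * R * s)\<^sup>2 * d^3"
      unfolding W2[symmetric] by (simp add: power_mult_distrib flip: power_mult)
    moreover have "F (of_real v) = of_real ((m * s\<^sup>2 - n\<^sup>2 * R\<^sup>2 * d^3 + (1 + m)\<^sup>2 * R * a * d)\<^sup>2
        - ((1 - m) * n * R * s)\<^sup>2 * d^3)"
      unfolding F_def S_def A_def D_def s_def a_def d_def by (simp flip: of_real_trig_poly)
    ultimately show "F (of_real v) = 0"
      by simp
  qed
  moreover have "S z = 0" if "D z = 0" and "F z = 0" for z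
    using that m unfolding F_def by simp
  ultimately show ?thesis
    using trig_poly_eq_0_if_vanishes_where_square_eq_minus_1[OF \<omega>] unfolding S_def D_def by blast
qed

lemma LW_trig_identity_forces_minimal:
  fixes \<omega>0 \<omega>1 \<omega>2 \<sigma>0 \<sigma>1 \<sigma>2 \<alpha>0 \<alpha>1 \<alpha>2 R m n v0 v1 :: real
  defines "W \<equiv> \<lambda>v. sqrt (1 + (trig_poly \<omega>0 \<omega>1 \<omega>2 v)\<^sup>2)"
  assumes R: "R > 0" and m: "m \<noteq> 0" and v: "v0 < v1" and \<omega>: "\<omega>1 \<noteq> 0 \<or> \<omega>2 \<noteq> 0"
    and \<sigma>\<alpha>: "\<sigma>0 \<noteq> 0 \<or> \<alpha>0 \<noteq> 0"
    and identity: "\<And>v. v \<in> {v0<..<v1} \<Longrightarrow>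
      m * (trig_poly \<sigma>0 \<sigma>1 \<sigma>2 v)\<^sup>2 + (1 - m) * n * R * trig_poly \<sigma>0 \<sigma>1 \<sigma>2 v * W v ^ 3
      - n\<^sup>2 * R\<^sup>2 * W v ^ 6 + (1 + m)\<^sup>2 * R * trig_poly \<alpha>0 \<alpha>1 \<alpha>2 v * (W v)\<^sup>2 = 0"
  shows "m = -1 \<and> n = 0"
proof -
  have \<sigma>: "\<sigma>0 = 0 \<and> \<sigma>1 = 0 \<and> \<sigma>2 = 0"
    using LW_trig_identity_S_eq_0[OF m v \<omega>] identity unfolding W_def by blast
  have W: "W v > 0" for v
    unfolding W_def by (simp add: add_pos_nonneg)
  have reduced: "(1 + m)\<^sup>2 * R * trig_poly \<alpha>0 \<alpha>1 \<alpha>2 v - n\<^sup>2 * R\<^sup>2 * (W v)^4 = 0"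
    if "v \<in> {v0<..<v1}" for v
  proof -
    have "(W v)\<^sup>2 * ((1 + m)\<^sup>2 * R * trig_poly \<alpha>0 \<alpha>1 \<alpha>2 v - n\<^sup>2 * R\<^sup>2 * (W v)^4) = 0"
      using identity[OF that] \<sigma> by (simp add: trig_poly_def algebra_simps flip: power_add)
    then show ?thesis
      using W[of v] by simp
  qed
  define A D :: "complex \<Rightarrow> complex"
    where "A = trig_poly \<alpha>0 \<alpha>1 \<alpha>2" and "D = (\<lambda>z. 1 + (trig_poly \<omega>0 \<omega>1 \<omega>2 z)\<^sup>2)"
  define G where "G = (\<lambda>z. (1 + m)\<^sup>2 * R * A z - n\<^sup>2 * R\<^sup>2 * (D z)\<^sup>2)"
  have G: "G z = 0" for z
  proof (rule holomorphic_eq_0_on_real_interval[where f = G, OF _ v])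
    show "G holomorphic_on UNIV"
      unfolding G_def A_def D_def by (intro holomorphic_intros)
  next
    fix v assume "v \<in> {v0<..<v1}"
    have "(W v)^4 = ((W v)\<^sup>2)\<^sup>2"
      by (simp flip: power_mult)
    also have "\<dots> = (1 + (trig_poly \<omega>0 \<omega>1 \<omega>2 v)\<^sup>2)\<^sup>2"
      unfolding W_def by simp
    finally have "G (of_real v) = of_real ((1 + m)\<^sup>2 * R * trig_poly \<alpha>0 \<alpha>1 \<alpha>2 v - n\<^sup>2 * R\<^sup>2 * (W v)^4)"
      unfolding G_def A_def D_def by (simp flip: of_real_trig_poly)
    then show "G (of_real v) = 0"
      using reduced[OF \<open>v \<in> {v0<..<v1}\<close>] by simp
  qed
  have "m = -1"
  proof (rule ccontr)
    assume "m \<noteq> -1"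
    then have "1 + complex_of_real m \<noteq> 0"
      by (simp add: complex_eq_iff)
    then have "A z = 0" if "D z = 0" for z
      using G[of z] that R unfolding G_def by simp
    then have "\<alpha>0 = 0"
      using trig_poly_eq_0_if_vanishes_where_square_eq_minus_1[OF \<omega>] unfolding A_def D_def by blast
    then show False
      using \<sigma> \<sigma>\<alpha> by simp
  qed
  moreover have "n = 0"
  proof -
    have "(v0 + v1) / 2 \<in> {v0<..<v1}"
      using v by simp
    from reduced[OF this] \<open>m = -1\<close> show ?thesis
      using R W[of "(v0 + v1) / 2"] by simp
  qed
  ultimately show ?thesis ..
qed

lemma const_mult_square_if_deriv_eq:
  fixes g r :: "real \<Rightarrow> real"
  assumes "convex I"
    and g: "\<And>t. t \<in> I \<Longrightarrow> (g has_real_derivative g' t) (at t)"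
    and r: "\<And>t. t \<in> I \<Longrightarrow> (r has_real_derivative r' t) (at t)"
    and r_nz: "\<And>t. t \<in> I \<Longrightarrow> r t \<noteq> 0"
    and ode: "\<And>t. t \<in> I \<Longrightarrow> r t * g' t = 2 * r' t * g t"
  shows "\<exists>c. \<forall>t\<in>I. g t = c * (r t)\<^sup>2"
proof -
  have "((\<lambda>t. g t / (r t)\<^sup>2) has_real_derivative 0) (at t within I)" if "t \<in> I" for t
  proof -
    have "((\<lambda>t. g t / (r t)\<^sup>2) has_real_derivative
        (g' t * (r t)\<^sup>2 - g t * (2 * r t * r' t)) / ((r t)\<^sup>2)\<^sup>2) (at t)"
      using that r_nz[OF that] by (auto intro!: derivative_eq_intros g r)
    moreover have "g' t * (r t)\<^sup>2 - g t * (2 * r t * r' t) = r t * (r t * g' t - 2 * r' t * g t)"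
      by (simp add: algebra_simps power2_eq_square)
    ultimately show ?thesis
      using ode[OF that] by (simp add: has_field_derivative_at_within)
  qed
  then obtain c where "\<forall>t\<in>I. g t / (r t)\<^sup>2 = c"
    using has_field_derivative_zero_constant[OF \<open>convex I\<close>] by blast
  then show ?thesis
    using r_nz by (auto simp: field_simps)
qed

context C2_riemann_type
begin

lemma LW_riemann_type_surf_minimal:
  assumes v: "v0 < v1" and m: "m \<noteq> 0" and u: "u \<in> I" and r: "r u > 0"
    and ab: "deriv a u \<noteq> 0 \<or> deriv b u \<noteq> 0"
    and relation: "\<And>v. v \<in> {v0<..<v1} \<Longrightarrow>
      kappa1 (riemann_type_surf a b r) u v = m * kappa2 (riemann_type_surf a b r) u v + n \<or>
      kappa2 (riemann_type_surf a b r) u v = m * kappa1 (riemann_type_surf a b r) u v + n"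
  shows "m = -1 \<and> n = 0"
proof (rule LW_trig_identity_forces_minimal[OF r m v ab _ riemann_type_surf_LW_identity[OF u r relation]])
  have "1 + (deriv a u)\<^sup>2 + (deriv b u)\<^sup>2 + (deriv r u)\<^sup>2 > 0"
    by (intro add_pos_nonneg) simp_all
  then show "1 + (deriv a u)\<^sup>2 + (deriv b u)\<^sup>2 + (deriv r u)\<^sup>2 - r u * deriv (deriv r) u \<noteq> 0
      \<or> deriv (deriv r) u \<noteq> 0"
    by auto
qed

lemma minimal_riemann_type_surf_ODE:
  assumes v: "v0 < v1" and r: "\<forall>u\<in>I. r u > 0"
    and minimal: "\<forall>u\<in>I. \<forall>v\<in>{v0<..<v1}. mean_curv (riemann_type_surf a b r) u v = 0"
    and u: "u \<in> I"
  shows "1 + (deriv a u)\<^sup>2 + (deriv b u)\<^sup>2 + (deriv r u)\<^sup>2 - r u * deriv (deriv r) u = 0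
    \<and> 2 * deriv r u * deriv a u - r u * deriv (deriv a) u = 0
    \<and> 2 * deriv r u * deriv b u - r u * deriv (deriv b) u = 0"
proof (rule trig_poly_eq_0_on_interval[OF v])
  fix v assume "v \<in> {v0<..<v1}"
  have "sqrt (1 + (trig_poly (deriv r u) (deriv a u) (deriv b u) v)\<^sup>2) > 0"
    by (simp add: add_pos_nonneg)
  then show "trig_poly (1 + (deriv a u)\<^sup>2 + (deriv b u)\<^sup>2 + (deriv r u)\<^sup>2 - r u * deriv (deriv r) u)
      (2 * deriv r u * deriv a u - r u * deriv (deriv a) u) (2 * deriv r u * deriv b u - r u * deriv (deriv b) u) v = 0"
    using riemann_type_surf_curvatures(1)[OF u, of v] minimal u r \<open>v \<in> {v0<..<v1}\<close> by auto
qed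

lemma riemann_example_if_minimal:
  assumes "convex I" and r: "\<forall>u\<in>I. r u > 0"
    and us: "us \<in> I" and ab: "deriv a us \<noteq> 0 \<or> deriv b us \<noteq> 0" and v: "v0 < v1"
    and minimal: "\<forall>u\<in>I. \<forall>v\<in>{v0<..<v1}. mean_curv (riemann_type_surf a b r) u v = 0"
  shows "\<exists>lam mu. lam\<^sup>2 + mu\<^sup>2 \<noteq> 0 \<and> (\<forall>u\<in>I. deriv a u = lam * (r u)\<^sup>2 \<and> deriv b u = mu * (r u)\<^sup>2 \<and>
    1 + (lam\<^sup>2 + mu\<^sup>2) * (r u)^4 + (deriv r u)\<^sup>2 - r u * deriv (deriv r) u = 0)"
proof -
  note ode = minimal_riemann_type_surf_ODE[OF v r minimal]
  have "\<exists>c. \<forall>u\<in>I. deriv f u = c * (r u)\<^sup>2"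
    if f: "(f, f') \<in> {(a, deriv (deriv a)), (b, deriv (deriv b))}"
      and ode_f: "\<And>u. u \<in> I \<Longrightarrow> 2 * deriv r u * deriv f u - r u * f' u = 0" for f f'
  proof (rule const_mult_square_if_deriv_eq[OF \<open>convex I\<close> _ dr])
    show "(deriv f has_real_derivative f' t) (at t)" if "t \<in> I" for t
      using dda ddb f \<open>t \<in> I\<close> by blast
    show "r t \<noteq> 0" if "t \<in> I" for t
      using r that by auto
    show "r t * f' t = 2 * deriv r t * deriv f t" if "t \<in> I" for t
      using ode_f[OF that] by linarith
  qed
  then obtain lam mu where lam: "\<forall>u\<in>I. deriv a u = lam * (r u)\<^sup>2" and mu: "\<forall>u\<in>I. deriv b u = mu * (r u)\<^sup>2"
    using ode by (metis insert_iff)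
  have "lam\<^sup>2 + mu\<^sup>2 \<noteq> 0"
    using ab lam mu us by auto
  moreover have "1 + (lam\<^sup>2 + mu\<^sup>2) * (r u)^4 + (deriv r u)\<^sup>2 - r u * deriv (deriv r) u = 0" if "u \<in> I" for u
  proof -
    have "(lam\<^sup>2 + mu\<^sup>2) * (r u)^4 = (deriv a u)\<^sup>2 + (deriv b u)\<^sup>2"
      using lam mu that by (simp add: power_mult_distrib algebra_simps flip: power_mult)
    then show ?thesis
      using ode[OF that] by simp
  qed
  ultimately show ?thesis
    using lam mu by blast
qed

end

lemma smooth_on_deriv: "smooth_on S f \<Longrightarrow> smooth_on S (deriv f)"
  unfolding smooth_on_def by (metis funpow_Suc_right comp_apply)

lemma smooth_on_has_real_derivative:
  "smooth_on S f \<Longrightarrow> t \<in> S \<Longrightarrow> (f has_real_derivative deriv f t) (at t)"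
  unfolding smooth_on_def DERIV_deriv_iff_real_differentiable by (metis funpow_0)

theorem theorem2:
  fixes a b r :: "real \<Rightarrow> real" and m n u0 u1 v0 v1 :: real
  assumes "u0 < u1" and "v0 < v1"
    and "smooth_on {u0<..<u1} a" and "smooth_on {u0<..<u1} b" and "smooth_on {u0<..<u1} r"
    and "\<forall>u\<in>{u0<..<u1}. r u > 0"
    and "LW_surface (riemann_type_surf a b r) ({u0<..<u1} \<times> {v0<..<v1}) m n"
  shows "(\<exists>ca cb. \<forall>u\<in>{u0<..<u1}. a u = ca \<and> b u = cb)
    \<or> (m = -1 \<and> n = 0 \<and>
       (\<exists>lam mu. lam^2 + mu^2 \<noteq> 0 \<and>
          (\<forall>u\<in>{u0<..<u1}. deriv a u = lam * (r u)^2 \<and> deriv b u = mu * (r u)^2 \<and>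
             1 + (lam^2 + mu^2) * (r u)^4 + (deriv r u)^2 - r u * deriv (deriv r) u = 0)))"
proof -
  define I where "I = {u0<..<u1}"
  note smooth = assms(3-5)[folded I_def]
  note d = smooth[THEN smooth_on_has_real_derivative]
  interpret C2_riemann_type a b r I
    using smooth[THEN smooth_on_deriv, THEN smooth_on_has_real_derivative]
    by unfold_locales (simp_all add: I_def d)
  have r: "\<forall>u\<in>I. r u > 0" and m: "m \<noteq> 0"
    and relation: "\<And>u v. u \<in> I \<Longrightarrow> v \<in> {v0<..<v1} \<Longrightarrow>
      kappa1 (riemann_type_surf a b r) u v = m * kappa2 (riemann_type_surf a b r) u v + n \<or>
      kappa2 (riemann_type_surf a b r) u v = m * kappa1 (riemann_type_surf a b r) u v + n"
    using assms(6,7) unfolding LW_surface_def I_def by auto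
  show ?thesis
  proof (cases "\<exists>u\<in>I. deriv a u \<noteq> 0 \<or> deriv b u \<noteq> 0")
    case True
    then obtain us where us: "us \<in> I" and ab: "deriv a us \<noteq> 0 \<or> deriv b us \<noteq> 0"
      by blast
    have mn: "m = -1 \<and> n = 0"
      using LW_riemann_type_surf_minimal[OF assms(2) m us _ ab relation[OF us]] r us by blast
    then have "\<forall>u\<in>I. \<forall>v\<in>{v0<..<v1}. mean_curv (riemann_type_surf a b r) u v = 0"
      using relation by (auto simp: kappa1_def kappa2_def)
    with mn show ?thesis
      using riemann_example_if_minimal[OF _ r us ab assms(2)] unfolding I_def by simp
  next
    case False
    have "\<exists>c. \<forall>u\<in>I. f u = c" if "f \<in> {a, b}" for f
      using has_field_derivative_zero_constant[of I f] d(1,2) that False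
      by (force simp: I_def has_field_derivative_at_within)
    then show ?thesis
      unfolding I_def by (metis insertCI)
  qed
qed

end
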